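(* Consider $K$ hypotheses $H_{01},\dots,H_{0K}$ with p-values $\mathbf p=(p_1,\dots,p_K)\in[0,1]^K$ satisfying: each $p_k$ is uniform on $[0,1]$ when $H_{0k}$ is true; the p-values are independent; and for each $k$ the alternative parameter set contains a sequence of parameters under which $\mathbb P(p_k<\epsilon)\to1$ for every $\epsilon>0$. Let $\Pi(D)=\int_{[0,1]^K}\sum_{k=1}^K a_k(\mathbf p)D_k(\mathbf p)\,d\mathbf p$ be a power objective whose coefficients $a_k:[0,1]^K\to\mathbb R$ are continuous and strictly decreasing in each coordinate. Let $(\phi_{\mathcal I})_{\emptyset\ne\mathcal I\subseteq[K]}$ be local tests ($\phi_{\mathcal I}:[0,1]^K\to\{0,1\}$, each a valid level-$\alpha$ test of the intersection hypothesis $H_{\mathcal I}=\bigcap_{i\in\mathcal I}H_{0i}$) of a closed testing procedure, with $\phi_{\{k\}}(\mathbf p)=\mathbb I(p_k\le\alpha)$ for all $k$, and let $D_k=\prod_{\mathcal I\ni k}\phi_{\mathcal I}$. Define $$\tilde\phi_{[K]}(\mathbf p)=\mathbb I\Big(\sum_{k=1}^K a_k(\mathbf p)\prod_{\mathcal I\ni k,\ \mathcal I\subsetneq[K]}\phi_{\mathcal I}(\mathbf p)>t_K\Big),$$ where $t_K$ is the smallest constant guaranteeing $\int_{[0,1]^K}\tilde\phi_{[K]}(\mathbf p)\,d\mathbf p\le\alpha$, and let $\tilde D_k=\tilde\phi_{[K]}\prod_{\mathcal I\ni k,\ \mathcal I\subsetneq[K]}\phi_{\mathcal I}$, $k\in[K]$.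 Then: 1. $\tilde D=(\tilde D_1,\dots,\tilde D_K)$ has the highest power $\Pi$ of any procedure based on the local tests $\{\phi_{\mathcal I}:\mathcal I\subsetneq[K]\}$ (i.e., among closed testing procedures using these local tests for all proper subsets together with any valid level-$\alpha$ test of the complete null $H_{[K]}$); in particular $\Pi(\tilde D)\ge\Pi(D)$. 2. If the local tests $(\phi_{\mathcal I})_{\mathcal I\subseteq[K]}$ are monotone, then $\tilde\phi_{[K]}$ and the resulting procedure $\tilde D$ are monotone.
   Context: $[K]=\{1,\dots,K\}$. A local test $\phi_{\mathcal I}$ is a valid level-$\alpha$ test of $H_{\mathcal I}$ if $\mathbb P(\phi_{\mathcal I}=1)\le\alpha$ whenever all $H_{0i}$, $i\in\mathcal I$, are true. In the closed testing procedure, $H_{0k}$ is rejected iff $\prod_{\mathcal I\ni k}\phi_{\mathcal I}(\mathbf p)=1$. A local test is monotone if decreasing any p-value cannot change its value from 1 to 0; a procedure $D$ is monotone if coordinatewise smaller p-value vectors yield coordinatewise larger decision vectors.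
   Formalization: The coefficients $a_k$ are also nonnegative on $[0,1]^K$, some parameter makes every $H_{0k}$ true at once, and $0<\alpha<1$. Apart from conventions, each condition added here is assumed in the paper as well or is needed for the statement above to hold. *)

theory Defs
  imports "HOL-Probability.Probability"
begin

definition cube_set :: "nat \<Rightarrow> (nat \<Rightarrow> real) set" where
  "cube_set K = PiE {1..K} (\<lambda>_. {0..1})"

definition cube :: "nat \<Rightarrow> (nat \<Rightarrow> real) measure" where
  "cube K = PiM {1..K} (\<lambda>_. restrict_space lborel {0..1})"

definition proper_sets_containing :: "nat \<Rightarrow> nat \<Rightarrow> nat set set" where
  "proper_sets_containing K k = {I. I \<subseteq> {1..K} \<and> I \<noteq> {1..K} \<and> k \<in> I}"

definition closed_testing :: "nat \<Rightarrow> (nat set \<Rightarrow> (nat \<Rightarrow> real) \<Rightarrow> bool) \<Rightarrow> nat \<Rightarrow> (nat \<Rightarrow> real) \<Rightarrow> bool" where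
  "closed_testing K \<phi> k p = (\<forall>I. I \<subseteq> {1..K} \<and> k \<in> I \<longrightarrow> \<phi> I p)"

definition power_obj :: "nat \<Rightarrow> (nat \<Rightarrow> (nat \<Rightarrow> real) \<Rightarrow> real) \<Rightarrow> (nat \<Rightarrow> (nat \<Rightarrow> real) \<Rightarrow> bool) \<Rightarrow> real" where
  "power_obj K a D = (\<integral>p. (\<Sum>k\<in>{1..K}. a k p * of_bool (D k p)) \<partial>cube K)"

definition valid_test :: "'t set \<Rightarrow> ('t \<Rightarrow> (nat \<Rightarrow> real) measure) \<Rightarrow> (nat \<Rightarrow> 't \<Rightarrow> bool)
    \<Rightarrow> real \<Rightarrow> nat set \<Rightarrow> ((nat \<Rightarrow> real) \<Rightarrow> bool) \<Rightarrow> bool" where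
  "valid_test \<Theta> P null \<alpha> I \<psi> =
     (\<forall>\<theta>\<in>\<Theta>. (\<forall>i\<in>I. null i \<theta>) \<longrightarrow> measure (P \<theta>) {p \<in> space (P \<theta>). \<psi> p} \<le> \<alpha>)"

definition mono_test :: "nat \<Rightarrow> ((nat \<Rightarrow> real) \<Rightarrow> bool) \<Rightarrow> bool" where
  "mono_test K \<psi> = (\<forall>p\<in>cube_set K. \<forall>q\<in>cube_set K.
      (\<forall>k\<in>{1..K}. q k \<le> p k) \<longrightarrow> \<psi> p \<longrightarrow> \<psi> q)"

definition mono_proc :: "nat \<Rightarrow> (nat \<Rightarrow> (nat \<Rightarrow> real) \<Rightarrow> bool) \<Rightarrow> bool" where
  "mono_proc K D = (\<forall>p\<in>cube_set K. \<forall>q\<in>cube_set K.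
      (\<forall>k\<in>{1..K}. q k \<le> p k) \<longrightarrow> (\<forall>k\<in>{1..K}. D k p \<longrightarrow> D k q))"

definition stat_S :: "nat \<Rightarrow> (nat \<Rightarrow> (nat \<Rightarrow> real) \<Rightarrow> real) \<Rightarrow> (nat set \<Rightarrow> (nat \<Rightarrow> real) \<Rightarrow> bool)
    \<Rightarrow> (nat \<Rightarrow> real) \<Rightarrow> real" where
  "stat_S K a \<phi> p = (\<Sum>k\<in>{1..K}. a k p * of_bool (\<forall>I\<in>proper_sets_containing K k. \<phi> I p))"

definition thr_K :: "nat \<Rightarrow> (nat \<Rightarrow> (nat \<Rightarrow> real) \<Rightarrow> real) \<Rightarrow> (nat set \<Rightarrow> (nat \<Rightarrow> real) \<Rightarrow> bool)
    \<Rightarrow> real \<Rightarrow> real" where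
  "thr_K K a \<phi> \<alpha> = Inf {t. measure (cube K) {p \<in> space (cube K). stat_S K a \<phi> p > t} \<le> \<alpha>}"

definition phi_tilde :: "nat \<Rightarrow> (nat \<Rightarrow> (nat \<Rightarrow> real) \<Rightarrow> real) \<Rightarrow> (nat set \<Rightarrow> (nat \<Rightarrow> real) \<Rightarrow> bool)
    \<Rightarrow> real \<Rightarrow> (nat \<Rightarrow> real) \<Rightarrow> bool" where
  "phi_tilde K a \<phi> \<alpha> p = (stat_S K a \<phi> p > thr_K K a \<phi> \<alpha>)"

definition proc_with :: "nat \<Rightarrow> (nat set \<Rightarrow> (nat \<Rightarrow> real) \<Rightarrow> bool) \<Rightarrow> ((nat \<Rightarrow> real) \<Rightarrow> bool)
    \<Rightarrow> nat \<Rightarrow> (nat \<Rightarrow> real) \<Rightarrow> bool" where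
  "proc_with K \<phi> \<psi> k p = (\<psi> p \<and> (\<forall>I\<in>proper_sets_containing K k. \<phi> I p))"

end

theory Submission
  imports Defs
begin

(* Once the proper local tests are fixed, a procedure built from a complete-null test psi
   rejects H_k iff psi rejects and all proper tests containing k reject, so its power is
   the integral of S * psi for the statistic S = sum_k a_k prod_{I proper, k in I} phi_I.
   Under the complete null the p-values are i.i.d. uniform, so a valid psi is just a set of
   Lebesgue measure at most alpha in the cube, and the Neyman-Pearson argument shows that
   among such sets the integral of S is maximised by the upper level set {S > t_K}. Because each
   nonempty partial sum of the a_k is strictly decreasing in every coordinate, S has no
   atoms at positive heights, so {S > t_K} has measure exactly alpha when t_K > 0.
   Monotonicity follows because S is antitone when the a_k and the proper tests are. *)

abbreviation unit_lborel :: "real measure" where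
  "unit_lborel \<equiv> restrict_space lborel {0..1}"

lemma space_cube: "space (cube K) = cube_set K"
  by (simp add: cube_def cube_set_def space_PiM space_restrict_space)

lemma prob_space_cube: "prob_space (cube K)"
  unfolding cube_def by (intro prob_space_PiM prob_space_restrict_space) auto

lemma product_sigma_finite_unit_lborel: "product_sigma_finite (\<lambda>_. unit_lborel)"
  unfolding product_sigma_finite_def
  by (auto intro: sigma_finite_measure_restrict_space lborel.sigma_finite_measure_axioms)

lemma measurable_coordinate_cube: "(\<lambda>p. p i) \<in> borel_measurable (cube K)"
proof (cases "i \<in> {1..K}")
  case True
  have "(\<lambda>p. p i) \<in> measurable (cube K) unit_lborel"
    unfolding cube_def using True by (rule measurable_component_singleton)
  then show ?thesis by (simp add: measurable_restrict_space2_iff)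
next
  case False
  have "(\<lambda>p. p i) \<in> borel_measurable (cube K) \<longleftrightarrow> (\<lambda>p. undefined :: real) \<in> borel_measurable (cube K)"
    by (rule measurable_cong) (use False in \<open>auto simp: space_cube cube_set_def PiE_def extensional_def\<close>)
  then show ?thesis by simp
qed

lemma borel_measurable_continuous_on_cube:
  fixes f :: "(nat \<Rightarrow> real) \<Rightarrow> real"
  assumes "continuous_on (cube_set K) f"
  shows "f \<in> borel_measurable (cube K)"
proof -
  have "(\<lambda>p. p) \<in> borel_measurable (cube K)"
    by (rule measurable_coordinatewise_then_product) (rule measurable_coordinate_cube)
  then have "(\<lambda>p. p) \<in> measurable (cube K) (restrict_space borel (cube_set K))"
    by (intro measurable_restrict_space2) (auto simp: space_cube)
  moreover have "f \<in> borel_measurable (restrict_space borel (cube_set K))"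
    by (rule borel_measurable_continuous_on_restrict[OF assms])
  ultimately show ?thesis using measurable_comp by fastforce
qed

lemma emeasure_uniform_unit_interval:
  assumes "A \<in> sets unit_lborel"
  shows "emeasure (uniform_measure lborel {0..1::real}) A = emeasure unit_lborel A"
proof -
  have "A \<subseteq> {0..1}" "A \<in> sets borel"
    using assms by (auto simp: sets_restrict_space_iff)
  then show ?thesis
    by (simp add: emeasure_restrict_space Int_absorb1 Int_absorb2 divide_ennreal_def)
qed

lemma indep_uniform_coordinates_eq_cube:
  assumes "K \<ge> 1" and "prob_space M" and sets_M: "sets M = sets (cube K)"
    and unif: "\<And>k. k \<in> {1..K} \<Longrightarrow> distr M borel (\<lambda>p. p k) = uniform_measure lborel {0..1::real}"
    and indep: "prob_space.indep_vars M (\<lambda>_. borel) (\<lambda>k p. p k) {1..K}"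
  shows "M = cube K"
proof -
  interpret prob_space M by fact
  let ?I = "{1..K}" and ?r = "\<lambda>x. \<lambda>i\<in>{1..K}. x i"
  have space_M: "space M = cube_set K"
    using sets_eq_imp_space_eq[OF sets_M] by (simp add: space_cube)
  have rv: "random_variable borel (\<lambda>p. p k)" for k
    using measurable_coordinate_cube measurable_cong_sets[OF sets_M refl] by blast
  have distr_r: "distr M (PiM ?I (\<lambda>_. borel)) ?r = PiM ?I (\<lambda>_. uniform_measure lborel {0..1::real})"
  proof -
    have "distr M (PiM ?I (\<lambda>_. borel)) ?r = PiM ?I (\<lambda>i. distr M borel (\<lambda>p. p i))"
      using indep rv \<open>K \<ge> 1\<close> by (subst (asm) indep_vars_iff_distr_eq_PiM) auto
    also have "\<dots> = PiM ?I (\<lambda>_. uniform_measure lborel {0..1::real})"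
      by (rule PiM_cong) (auto simp: unif)
    finally show ?thesis .
  qed
  have "M = PiM ?I (\<lambda>_. unit_lborel)"
  proof (rule product_sigma_finite.PiM_eqI[OF product_sigma_finite_unit_lborel])
    show "sets M = sets (PiM ?I (\<lambda>_. unit_lborel))"
      using sets_M by (simp add: cube_def)
    fix A assume A: "\<And>i. i \<in> ?I \<Longrightarrow> A i \<in> sets unit_lborel"
    then have A_borel: "A i \<in> sets borel" "A i \<subseteq> {0..1}" if "i \<in> ?I" for i
      using that by (auto simp: sets_restrict_space_iff)
    have box: "PiE ?I A \<in> sets (PiM ?I (\<lambda>_. borel))"
      using A_borel by (auto intro!: sets_PiM_I_finite)
    have "PiE ?I A \<subseteq> space M"
      unfolding space_M cube_set_def using A_borel(2) by (intro PiE_mono) auto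
    then have "?r -` PiE ?I A \<inter> space M = PiE ?I A"
      by (auto simp: space_M cube_set_def PiE_restrict)
    then have "emeasure M (PiE ?I A) = emeasure (distr M (PiM ?I (\<lambda>_. borel)) ?r) (PiE ?I A)"
      using rv box by (subst emeasure_distr) (auto intro!: measurable_PiM_single')
    also have "\<dots> = (\<Prod>i\<in>?I. emeasure (uniform_measure lborel {0..1::real}) (A i))"
      unfolding distr_r using A_borel prob_space_uniform_measure[of lborel "{0..1::real}"]
      by (intro product_sigma_finite.emeasure_PiM)
         (auto simp: product_sigma_finite_def prob_space_imp_sigma_finite)
    also have "\<dots> = (\<Prod>i\<in>?I. emeasure unit_lborel (A i))"
      using A by (simp add: emeasure_uniform_unit_interval)
    finally show "emeasure M (PiE ?I A) = (\<Prod>i\<in>?I. emeasure unit_lborel (A i))" .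
  qed simp
  then show ?thesis by (simp add: cube_def)
qed

lemma valid_test_complete_null_iff_cube:
  assumes "K \<ge> 1"
    and "\<And>\<theta>. \<theta> \<in> \<Theta> \<Longrightarrow> prob_space (P \<theta>) \<and> sets (P \<theta>) = sets (cube K)"
    and "\<And>\<theta> k. \<theta> \<in> \<Theta> \<Longrightarrow> k \<in> {1..K} \<Longrightarrow> null k \<theta> \<Longrightarrow>
        distr (P \<theta>) borel (\<lambda>p. p k) = uniform_measure lborel {0..1::real}"
    and "\<And>\<theta>. \<theta> \<in> \<Theta> \<Longrightarrow> prob_space.indep_vars (P \<theta>) (\<lambda>_. borel) (\<lambda>k p. p k) {1..K}"
    and "\<exists>\<theta>\<in>\<Theta>. \<forall>k\<in>{1..K}. null k \<theta>"
  shows "valid_test \<Theta> P null \<alpha> {1..K} \<psi> \<longleftrightarrow> measure (cube K) {p \<in> space (cube K). \<psi> p} \<le> \<alpha>"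
proof -
  have "P \<theta> = cube K" if "\<theta> \<in> \<Theta>" "\<forall>k\<in>{1..K}. null k \<theta>" for \<theta>
    using that assms(1-4) by (intro indep_uniform_coordinates_eq_cube) auto
  then show ?thesis
    using assms(5) unfolding valid_test_def by auto
qed

definition antitone_cube :: "nat \<Rightarrow> ((nat \<Rightarrow> real) \<Rightarrow> 'b::order) \<Rightarrow> bool" where
  "antitone_cube K f \<longleftrightarrow> (\<forall>p\<in>cube_set K. \<forall>q\<in>cube_set K. (\<forall>j\<in>{1..K}. q j \<le> p j) \<longrightarrow> f p \<le> f q)"

lemma antitone_cubeI:
  "(\<And>p q. p \<in> cube_set K \<Longrightarrow> q \<in> cube_set K \<Longrightarrow> \<forall>j\<in>{1..K}. q j \<le> p j \<Longrightarrow> f p \<le> f q) \<Longrightarrow>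
    antitone_cube K f"
  by (simp add: antitone_cube_def)

lemma antitone_cubeD:
  "antitone_cube K f \<Longrightarrow> p \<in> cube_set K \<Longrightarrow> q \<in> cube_set K \<Longrightarrow> \<forall>j\<in>{1..K}. q j \<le> p j \<Longrightarrow> f p \<le> f q"
  by (simp add: antitone_cube_def)

lemma antitone_cubeI_coordinatewise:
  fixes f :: "(nat \<Rightarrow> real) \<Rightarrow> 'b::order"
  assumes decr: "\<And>p j x. p \<in> cube_set K \<Longrightarrow> j \<in> {1..K} \<Longrightarrow> 0 \<le> x \<Longrightarrow> x \<le> p j \<Longrightarrow> f p \<le> f (p(j := x))"
  shows "antitone_cube K f"
proof (rule antitone_cubeI)
  fix p q assume p: "p \<in> cube_set K" and q: "q \<in> cube_set K" and le: "\<forall>j\<in>{1..K}. q j \<le> p j"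
  define r where "r j = (\<lambda>i. if i \<in> {1..j} then q i else p i)" for j
  have "r j \<in> cube_set K \<and> f p \<le> f (r j)" if "j \<le> K" for j
    using that
  proof (induction j)
    case 0
    then show ?case using p by (simp add: r_def)
  next
    case (Suc j)
    then have IH: "r j \<in> cube_set K" "f p \<le> f (r j)" by auto
    have "r (Suc j) = (r j)(Suc j := q (Suc j))"
      by (auto simp: r_def)
    moreover have "0 \<le> q (Suc j)" "q (Suc j) \<le> r j (Suc j)"
      using q le Suc.prems by (auto simp: r_def cube_set_def PiE_iff)
    ultimately have "f (r j) \<le> f (r (Suc j))"
      using decr[OF IH(1), of "Suc j"] Suc.prems by auto
    moreover have "r (Suc j) \<in> cube_set K"
      using p q unfolding r_def cube_set_def by (auto simp: PiE_iff extensional_def)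
    ultimately show ?case using IH(2) by (auto intro: order_trans)
  qed
  moreover have "r K = q"
    using p q unfolding r_def cube_set_def by (auto simp: PiE_iff extensional_def)
  ultimately show "f p \<le> f q" by auto
qed

lemma mono_test_iff_antitone_cube: "mono_test K \<psi> \<longleftrightarrow> antitone_cube K \<psi>"
  by (auto simp: mono_test_def antitone_cube_def le_bool_def)

lemma null_sets_level_set_strict_antimono:
  fixes f :: "(nat \<Rightarrow> real) \<Rightarrow> real"
  assumes j: "j \<in> {1..K}" and f: "f \<in> borel_measurable (cube K)"
    and decr: "\<And>p x. p \<in> cube_set K \<Longrightarrow> 0 \<le> x \<Longrightarrow> x < p j \<Longrightarrow> f p < f (p(j := x))"
  shows "{p \<in> space (cube K). f p = c} \<in> null_sets (cube K)"
proof -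
  let ?L = "{p \<in> space (cube K). f p = c}" and ?J = "{1..K} - {j}"
  have L: "?L \<in> sets (cube K)" using f by measurable
  have cube_insert: "cube K = PiM (insert j ?J) (\<lambda>_. unit_lborel)"
    using j by (simp add: cube_def insert_absorb)
  \<comment> \<open>Fubini along coordinate j: by strict monotonicity every line parallel to the
    j-th axis meets the level set in at most one point.\<close>
  have "emeasure (cube K) ?L = (\<integral>\<^sup>+ p. indicator ?L p \<partial>cube K)"
    using L by simp
  also have "\<dots> = (\<integral>\<^sup>+ x. (\<integral>\<^sup>+ y. indicator ?L (x(j := y)) \<partial>unit_lborel) \<partial>PiM ?J (\<lambda>_. unit_lborel))"
    unfolding cube_insert
    by (rule product_sigma_finite.product_nn_integral_insert[OF product_sigma_finite_unit_lborel])
       (use L cube_insert in auto)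
  also have "\<dots> = (\<integral>\<^sup>+ x. 0 \<partial>PiM ?J (\<lambda>_. unit_lborel))"
  proof (rule nn_integral_cong)
    fix x assume x: "x \<in> space (PiM ?J (\<lambda>_. unit_lborel))"
    define T where "T = {y \<in> {0..1::real}. x(j := y) \<in> ?L}"
    have x_upd: "x(j := y) \<in> cube_set K" if "y \<in> {0..1}" for y
      using x that j unfolding cube_set_def
      by (auto simp: space_PiM space_restrict_space PiE_iff extensional_def)
    have inj: "inj_on (\<lambda>y. f (x(j := y))) {0..1}"
    proof (rule linorder_inj_onI')
      fix y1 y2 :: real assume "y1 \<in> {0..1}" "y2 \<in> {0..1}" "y1 < y2"
      then show "f (x(j := y1)) \<noteq> f (x(j := y2))"
        using decr[OF x_upd, of y2 y1] by simp
    qed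
    have "T \<subseteq> (\<lambda>y. f (x(j := y))) -` {c} \<inter> {0..1}"
      by (auto simp: T_def)
    then have "finite T"
      by (rule finite_subset) (rule finite_vimage_IntI[OF _ inj], simp)
    then have T: "T \<in> null_sets unit_lborel"
      by (auto simp: null_sets_restrict_space finite_imp_null_set_lborel T_def)
    have "(\<integral>\<^sup>+ y. indicator ?L (x(j := y)) \<partial>unit_lborel) = (\<integral>\<^sup>+ y. indicator T y \<partial>unit_lborel)"
      by (rule nn_integral_cong) (auto simp: T_def space_restrict_space indicator_def)
    also have "\<dots> = 0"
      using null_setsD1[OF T] null_setsD2[OF T] by simp
    finally show "(\<integral>\<^sup>+ y. indicator ?L (x(j := y)) \<partial>unit_lborel) = 0" .
  qed
  finally show ?thesis using L by auto
qed

lemma null_sets_level_set_weighted_indicator_sum: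
  fixes a :: "nat \<Rightarrow> (nat \<Rightarrow> real) \<Rightarrow> real" and B :: "nat \<Rightarrow> (nat \<Rightarrow> real) \<Rightarrow> bool"
  assumes a: "\<And>k. k \<in> {1..K} \<Longrightarrow> a k \<in> borel_measurable (cube K)"
    and decr: "\<And>k p j x. k \<in> {1..K} \<Longrightarrow> p \<in> cube_set K \<Longrightarrow> j \<in> {1..K} \<Longrightarrow>
        0 \<le> x \<Longrightarrow> x < p j \<Longrightarrow> a k p < a k (p(j := x))"
    and B: "\<And>k. k \<in> {1..K} \<Longrightarrow> Measurable.pred (cube K) (B k)"
    and "c \<noteq> 0"
  shows "{p \<in> space (cube K). (\<Sum>k\<in>{1..K}. a k p * of_bool (B k p)) = c} \<in> null_sets (cube K)"
proof -
  let ?N = "\<lambda>A. {p \<in> space (cube K). (\<Sum>k\<in>A. a k p) = c}"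
  let ?L = "{p \<in> space (cube K). (\<Sum>k\<in>{1..K}. a k p * of_bool (B k p)) = c}"
  have N: "?N A \<in> null_sets (cube K)" if "A \<in> Pow {1..K} - {{}}" for A
  proof -
    from that obtain j where j: "j \<in> A" and A: "A \<subseteq> {1..K}" by auto
    then have "finite A" by (auto intro: finite_subset)
    have "(\<lambda>p. \<Sum>k\<in>A. a k p) \<in> borel_measurable (cube K)"
      using a A by (intro borel_measurable_sum) auto
    then show ?thesis
      using A j \<open>finite A\<close> decr
      by (intro null_sets_level_set_strict_antimono[of j]) (auto simp: subset_iff intro!: sum_strict_mono)
  qed
  have "(\<lambda>p. \<Sum>k\<in>{1..K}. a k p * of_bool (B k p)) \<in> borel_measurable (cube K)"
    using a B by (intro borel_measurable_sum borel_measurable_times) auto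
  then have L: "?L \<in> sets (cube K)"
    by measurable
  have null: "(\<Union>A\<in>Pow {1..K} - {{}}. ?N A) \<in> null_sets (cube K)"
    using N by (intro null_sets_UN' countable_finite) auto
  \<comment> \<open>a point p of the level set lies on the level set of the sum over its active
    indices {k. B k p}, which is nonempty since c \<noteq> 0\<close>
  have cover: "?L \<subseteq> (\<Union>A\<in>Pow {1..K} - {{}}. ?N A)"
  proof
    fix p assume p: "p \<in> ?L"
    let ?A = "{k \<in> {1..K}. B k p}"
    have "(\<Sum>k\<in>{1..K}. a k p * of_bool (B k p)) = (\<Sum>k\<in>?A. a k p)"
      by (subst sum.inter_filter) (auto intro!: sum.cong simp: of_bool_def)
    then have "(\<Sum>k\<in>?A. a k p) = c"
      using p by simp
    moreover have "?A \<noteq> {}"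
    proof
      assume "?A = {}"
      then have "(\<Sum>k\<in>?A. a k p) = 0" by (simp only: sum.empty)
      with \<open>(\<Sum>k\<in>?A. a k p) = c\<close> \<open>c \<noteq> 0\<close> show False by linarith
    qed
    ultimately show "p \<in> (\<Union>A\<in>Pow {1..K} - {{}}. ?N A)"
      using p by (intro UN_I[of ?A]) auto
  qed
  from null L cover show ?thesis by (rule null_sets_subset)
qed

definition quantile :: "real measure \<Rightarrow> real \<Rightarrow> real" where
  "quantile M \<beta> = Inf {t. \<beta> \<le> cdf M t}"

context real_distribution
begin

lemma bdd_below_cdf_ge:
  assumes "0 < \<beta>"
  shows "bdd_below {t. \<beta> \<le> cdf M t}"
proof -
  have "eventually (\<lambda>t. cdf M t < \<beta>) at_bot"
    using order_tendstoD(2)[OF cdf_lim_at_bot assms] .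
  then obtain b where "\<And>t. t \<le> b \<Longrightarrow> cdf M t < \<beta>"
    unfolding eventually_at_bot_linorder by blast
  then show ?thesis
    by (intro bdd_belowI[of _ b]) (metis mem_Collect_eq not_le less_imp_le)
qed

lemma cdf_ge_nonempty:
  assumes "\<beta> < 1"
  shows "{t. \<beta> \<le> cdf M t} \<noteq> {}"
proof -
  have "eventually (\<lambda>t. \<beta> < cdf M t) at_top"
    using order_tendstoD(1)[OF cdf_lim_at_top_prob assms] .
  then obtain t where "\<beta> < cdf M t"
    using eventually_happens' by fastforce
  then show ?thesis by (auto intro: less_imp_le)
qed

lemma cdf_quantile_ge:
  assumes "0 < \<beta>" "\<beta> < 1"
  shows "\<beta> \<le> cdf M (quantile M \<beta>)"
proof -
  let ?T = "{t. \<beta> \<le> cdf M t}"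
  have "\<beta> \<le> cdf M x" if x: "quantile M \<beta> < x" for x
  proof -
    obtain s where "\<beta> \<le> cdf M s" "s < x"
      using cInf_lessD[OF cdf_ge_nonempty[OF assms(2)] x[unfolded quantile_def]] by blast
    then show ?thesis using cdf_nondecreasing[of s x] by linarith
  qed
  with eventually_at_right_less have "eventually (\<lambda>x. \<beta> \<le> cdf M x) (at_right (quantile M \<beta>))"
    by (rule eventually_mono)
  moreover have "(cdf M \<longlongrightarrow> cdf M (quantile M \<beta>)) (at_right (quantile M \<beta>))"
    using cdf_is_right_cont by (simp add: continuous_within)
  ultimately show ?thesis
    by (intro tendsto_lowerbound) auto
qed

lemma cdf_quantile_le:
  assumes "0 < \<beta>" and no_atom: "measure M {quantile M \<beta>} = 0"
  shows "cdf M (quantile M \<beta>) \<le> \<beta>"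
proof -
  let ?q = "quantile M \<beta>"
  have "cdf M x \<le> \<beta>" if "x < ?q" for x
    using cInf_lower[OF _ bdd_below_cdf_ge[OF assms(1)], of x] that
    unfolding quantile_def by force
  then have "eventually (\<lambda>x. cdf M x \<le> \<beta>) (at_left ?q)"
    using eventually_at_left_real[of "?q - 1" ?q] by (auto elim: eventually_mono)
  moreover have "isCont (cdf M) ?q"
    using no_atom isCont_cdf by simp
  then have "(cdf M \<longlongrightarrow> cdf M ?q) (at_left ?q)"
    by (simp add: isCont_def filterlim_at_split)
  ultimately show ?thesis
    by (intro tendsto_upperbound) auto
qed

lemma quantile_nonneg:
  assumes "0 < \<beta>" "\<beta> < 1" and "measure M {..<0} = 0"
  shows "0 \<le> quantile M \<beta>"
  unfolding quantile_def
proof (rule cInf_greatest[OF cdf_ge_nonempty[OF assms(2)]])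
  fix t assume t: "t \<in> {t. \<beta> \<le> cdf M t}"
  show "0 \<le> t"
  proof (rule ccontr)
    assume "\<not> 0 \<le> t"
    then have "cdf M t \<le> measure M {..<0}"
      unfolding cdf_def by (intro finite_measure_mono) auto
    with t assms show False by simp
  qed
qed

end

lemma integral_of_bool: "(\<integral>x. of_bool (P x) \<partial>M) = measure M {x \<in> space M. P x}"
proof -
  have "(\<integral>x. of_bool (P x) \<partial>M) = (\<integral>x. indicator {x \<in> space M. P x} x \<partial>M)"
    by (rule Bochner_Integration.integral_cong) (auto simp: indicator_def)
  also have "\<dots> = measure M {x \<in> space M. P x}"
    by (simp add: Int_absorb2)
  finally show ?thesis .
qed

context prob_space
begin

lemma prob_greater_eq_1_minus_cdf:
  assumes "random_variable borel S"
  shows "prob {x \<in> space M. t < S x} = 1 - cdf (distr M borel S) t"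
proof -
  have "cdf (distr M borel S) t = prob (S -` {..t} \<inter> space M)"
    unfolding cdf_def using assms by (simp add: measure_distr)
  moreover have "{x \<in> space M. t < S x} = space M - (S -` {..t} \<inter> space M)"
    by auto
  ultimately show ?thesis
    using assms by (simp add: prob_compl)
qed

lemma Inf_tail_prob_le_eq_quantile:
  assumes "random_variable borel S"
  shows "Inf {t. prob {x \<in> space M. t < S x} \<le> \<alpha>} = quantile (distr M borel S) (1 - \<alpha>)"
  unfolding quantile_def prob_greater_eq_1_minus_cdf[OF assms] by (rule arg_cong[where f=Inf]) auto

lemma tail_prob_at_quantile:
  fixes S :: "'a \<Rightarrow> real"
  assumes S: "random_variable borel S" and "0 < \<alpha>" "\<alpha> < 1"
  defines "q \<equiv> quantile (distr M borel S) (1 - \<alpha>)"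
  shows "prob {x \<in> space M. q < S x} \<le> \<alpha>"
    and "prob {x \<in> space M. S x = q} = 0 \<Longrightarrow> prob {x \<in> space M. q < S x} = \<alpha>"
    and "(\<And>x. x \<in> space M \<Longrightarrow> 0 \<le> S x) \<Longrightarrow> 0 \<le> q"
proof -
  interpret D: real_distribution "distr M borel S"
    using S by (rule real_distribution_distr)
  have "0 < 1 - \<alpha>" "1 - \<alpha> < 1" using assms by auto
  note tail = prob_greater_eq_1_minus_cdf[OF S]
  show "prob {x \<in> space M. q < S x} \<le> \<alpha>"
    using D.cdf_quantile_ge[OF \<open>0 < 1 - \<alpha>\<close> \<open>1 - \<alpha> < 1\<close>] by (simp add: tail q_def)
  show "prob {x \<in> space M. q < S x} = \<alpha>" if no_atom: "prob {x \<in> space M. S x = q} = 0"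
  proof -
    have "measure (distr M borel S) {q} = prob {x \<in> space M. S x = q}"
      using S by (simp add: measure_distr vimage_def Int_def conj_commute)
    then have "cdf (distr M borel S) q \<le> 1 - \<alpha>"
      using D.cdf_quantile_le[OF \<open>0 < 1 - \<alpha>\<close>] no_atom by (simp add: q_def)
    then show ?thesis
      using D.cdf_quantile_ge[OF \<open>0 < 1 - \<alpha>\<close> \<open>1 - \<alpha> < 1\<close>] by (simp add: tail q_def)
  qed
  show "0 \<le> q" if nonneg: "\<And>x. x \<in> space M \<Longrightarrow> 0 \<le> S x"
  proof -
    have "S -` {..<0} \<inter> space M = {}"
      using nonneg by force
    then have "measure (distr M borel S) {..<0} = 0"
      using S by (simp add: measure_distr)
    then show ?thesis
      unfolding q_def using D.quantile_nonneg \<open>0 < 1 - \<alpha>\<close> \<open>1 - \<alpha> < 1\<close> by blast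
  qed
qed

lemma neyman_pearson:
  fixes S :: "'a \<Rightarrow> real"
  assumes S: "integrable M S" and \<psi>: "Measurable.pred M \<psi>" and "0 \<le> t"
    and size: "t \<noteq> 0 \<Longrightarrow> prob {x \<in> space M. \<psi> x} \<le> prob {x \<in> space M. t < S x}"
  shows "(\<integral>x. S x * of_bool (\<psi> x) \<partial>M) \<le> (\<integral>x. S x * of_bool (t < S x) \<partial>M)"
proof -
  have S_meas [measurable]: "S \<in> borel_measurable M"
    using S by blast
  have test: "Measurable.pred M (\<lambda>x. t < S x)"
    by measurable
  have int_S: "integrable M (\<lambda>x. S x * of_bool (P x))" if [measurable]: "Measurable.pred M P" for P
    by (rule Bochner_Integration.integrable_bound[OF S]) (auto simp: abs_mult)
  have int_1: "integrable M (\<lambda>x. of_bool (P x) :: real)" if [measurable]: "Measurable.pred M P" for P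
    by (rule integrable_const_bound[where B=1]) auto
  \<comment> \<open>pointwise (S x - t) * (of_bool (t < S x) - of_bool (\<psi> x)) \<ge> 0\<close>
  have "(\<integral>x. S x * of_bool (\<psi> x) - t * of_bool (\<psi> x) \<partial>M)
      \<le> (\<integral>x. S x * of_bool (t < S x) - t * of_bool (t < S x) \<partial>M)"
    using int_S[OF \<psi>] int_S[OF test] int_1[OF \<psi>] int_1[OF test]
    by (intro integral_mono) (auto simp: of_bool_def)
  then have "(\<integral>x. S x * of_bool (\<psi> x) \<partial>M) - t * prob {x \<in> space M. \<psi> x}
      \<le> (\<integral>x. S x * of_bool (t < S x) \<partial>M) - t * prob {x \<in> space M. t < S x}"
    using int_S[OF \<psi>] int_S[OF test] int_1[OF \<psi>] int_1[OF test]
    by (simp add: integral_of_bool)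
  moreover have "t * prob {x \<in> space M. \<psi> x} \<le> t * prob {x \<in> space M. t < S x}"
    using size \<open>0 \<le> t\<close> by (cases "t = 0") (auto intro: mult_left_mono)
  ultimately show ?thesis by linarith
qed

end

lemma finite_proper_sets_containing: "finite (proper_sets_containing K k)"
  by (rule finite_subset[of _ "Pow {1..K}"]) (auto simp: proper_sets_containing_def)

lemma proper_sets_containing_iff:
  "I \<in> proper_sets_containing K k \<longleftrightarrow> k \<in> I \<and> I \<subset> {1..K}"
  by (auto simp: proper_sets_containing_def)

lemma measurable_all_proper_tests:
  assumes "\<And>I. I \<noteq> {} \<Longrightarrow> I \<subset> {1..K} \<Longrightarrow> Measurable.pred (cube K) (\<phi> I)"
  shows "Measurable.pred (cube K) (\<lambda>p. \<forall>I\<in>proper_sets_containing K k. \<phi> I p)"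
  using assms by (intro pred_intros_finite(3)[OF finite_proper_sets_containing])
    (auto simp: proper_sets_containing_iff)

lemma stat_S_measurable:
  assumes "\<And>k. k \<in> {1..K} \<Longrightarrow> a k \<in> borel_measurable (cube K)"
    and "\<And>I. I \<noteq> {} \<Longrightarrow> I \<subset> {1..K} \<Longrightarrow> Measurable.pred (cube K) (\<phi> I)"
  shows "stat_S K a \<phi> \<in> borel_measurable (cube K)"
proof -
  have "Measurable.pred (cube K) (\<lambda>p. \<forall>I\<in>proper_sets_containing K k. \<phi> I p)" for k
    using assms(2) by (rule measurable_all_proper_tests)
  then show ?thesis
    unfolding stat_S_def[abs_def] using assms(1)
    by (intro borel_measurable_sum borel_measurable_times) auto
qed

lemma integrable_stat_S:
  assumes "\<And>k. k \<in> {1..K} \<Longrightarrow> a k \<in> borel_measurable (cube K)"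
    and "\<And>I. I \<noteq> {} \<Longrightarrow> I \<subset> {1..K} \<Longrightarrow> Measurable.pred (cube K) (\<phi> I)"
    and a_nonneg: "\<And>k p. k \<in> {1..K} \<Longrightarrow> p \<in> cube_set K \<Longrightarrow> 0 \<le> a k p"
    and a_anti: "\<And>k. k \<in> {1..K} \<Longrightarrow> antitone_cube K (a k)"
  shows "integrable (cube K) (stat_S K a \<phi>)"
proof -
  interpret prob_space "cube K" by (rule prob_space_cube)
  define z where "z = (\<lambda>i\<in>{1..K}. 0::real)"
  have z: "z \<in> cube_set K" and z_le: "\<forall>j\<in>{1..K}. z j \<le> p j" if "p \<in> cube_set K" for p
    using that by (auto simp: z_def cube_set_def PiE_iff)
  have "\<bar>stat_S K a \<phi> p\<bar> \<le> (\<Sum>k\<in>{1..K}. a k z)" if "p \<in> cube_set K" for p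
  proof -
    have "0 \<le> stat_S K a \<phi> p"
      unfolding stat_S_def using a_nonneg that by (intro sum_nonneg) auto
    moreover have "stat_S K a \<phi> p \<le> (\<Sum>k\<in>{1..K}. a k z)"
      unfolding stat_S_def
    proof (rule sum_mono)
      fix k assume k: "k \<in> {1..K}"
      have "a k p \<le> a k z"
        using a_anti[OF k] that z[OF that] z_le[OF that] by (rule antitone_cubeD)
      then show "a k p * of_bool (\<forall>I\<in>proper_sets_containing K k. \<phi> I p) \<le> a k z"
        using a_nonneg[OF k that] by auto
    qed
    ultimately show ?thesis by simp
  qed
  then show ?thesis
    using stat_S_measurable[OF assms(1,2)]
    by (intro integrable_const_bound[where B="\<Sum>k\<in>{1..K}. a k z"]) (auto simp: space_cube)
qed

lemma antitone_cube_all_proper_tests: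
  assumes "\<And>I. I \<noteq> {} \<Longrightarrow> I \<subset> {1..K} \<Longrightarrow> mono_test K (\<phi> I)"
  shows "antitone_cube K (\<lambda>p. \<forall>I\<in>proper_sets_containing K k. \<phi> I p)"
proof (rule antitone_cubeI)
  fix p q assume pq: "p \<in> cube_set K" "q \<in> cube_set K" "\<forall>j\<in>{1..K}. q j \<le> p j"
  have "\<phi> I p \<le> \<phi> I q" if "I \<in> proper_sets_containing K k" for I
  proof -
    have "antitone_cube K (\<phi> I)"
      using that assms by (auto simp: proper_sets_containing_iff simp flip: mono_test_iff_antitone_cube)
    then show ?thesis using pq by (rule antitone_cubeD)
  qed
  then show "(\<forall>I\<in>proper_sets_containing K k. \<phi> I p) \<le> (\<forall>I\<in>proper_sets_containing K k. \<phi> I q)"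
    by (auto simp: le_bool_def)
qed

lemma antitone_cube_stat_S:
  assumes a_nonneg: "\<And>k p. k \<in> {1..K} \<Longrightarrow> p \<in> cube_set K \<Longrightarrow> 0 \<le> a k p"
    and a_anti: "\<And>k. k \<in> {1..K} \<Longrightarrow> antitone_cube K (a k)"
    and \<phi>_mono: "\<And>I. I \<noteq> {} \<Longrightarrow> I \<subset> {1..K} \<Longrightarrow> mono_test K (\<phi> I)"
  shows "antitone_cube K (stat_S K a \<phi>)"
proof (rule antitone_cubeI)
  fix p q assume pq: "p \<in> cube_set K" "q \<in> cube_set K" "\<forall>j\<in>{1..K}. q j \<le> p j"
  show "stat_S K a \<phi> p \<le> stat_S K a \<phi> q"
    unfolding stat_S_def
  proof (rule sum_mono)
    fix k assume k: "k \<in> {1..K}"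
    let ?B = "\<lambda>p. \<forall>I\<in>proper_sets_containing K k. \<phi> I p"
    have "a k p \<le> a k q"
      using a_anti[OF k] pq by (rule antitone_cubeD)
    moreover have "?B p \<le> ?B q"
      using antitone_cube_all_proper_tests[where \<phi>=\<phi>, OF \<phi>_mono] pq by (rule antitone_cubeD)
    ultimately show "a k p * of_bool (?B p) \<le> a k q * of_bool (?B q)"
      using a_nonneg[OF k pq(1)] by (auto simp: le_bool_def)
  qed
qed

lemma mono_test_phi_tilde:
  assumes "antitone_cube K (stat_S K a \<phi>)"
  shows "mono_test K (phi_tilde K a \<phi> \<alpha>)"
  unfolding mono_test_iff_antitone_cube
proof (rule antitone_cubeI)
  fix p q assume "p \<in> cube_set K" "q \<in> cube_set K" "\<forall>j\<in>{1..K}. q j \<le> p j"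
  with assms have "stat_S K a \<phi> p \<le> stat_S K a \<phi> q"
    by (rule antitone_cubeD)
  then show "phi_tilde K a \<phi> \<alpha> p \<le> phi_tilde K a \<phi> \<alpha> q"
    by (auto simp: phi_tilde_def le_bool_def)
qed

lemma mono_proc_proc_with:
  assumes \<psi>_mono: "mono_test K \<psi>" and \<phi>_mono: "\<And>I. I \<noteq> {} \<Longrightarrow> I \<subset> {1..K} \<Longrightarrow> mono_test K (\<phi> I)"
  shows "mono_proc K (proc_with K \<phi> \<psi>)"
  unfolding mono_proc_def proc_with_def
proof (intro ballI impI)
  fix p q k assume pq: "p \<in> cube_set K" "q \<in> cube_set K" "\<forall>j\<in>{1..K}. q j \<le> p j"
  have "\<psi> p \<le> \<psi> q"
    using \<psi>_mono[unfolded mono_test_iff_antitone_cube] pq by (rule antitone_cubeD)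
  moreover have "(\<forall>I\<in>proper_sets_containing K k. \<phi> I p) \<le> (\<forall>I\<in>proper_sets_containing K k. \<phi> I q)"
    using antitone_cube_all_proper_tests[where \<phi>=\<phi>, OF \<phi>_mono] pq by (rule antitone_cubeD)
  ultimately show "\<psi> p \<and> (\<forall>I\<in>proper_sets_containing K k. \<phi> I p) \<Longrightarrow>
      \<psi> q \<and> (\<forall>I\<in>proper_sets_containing K k. \<phi> I q)"
    by (auto simp: le_bool_def)
qed

lemma power_obj_proc_with:
  "power_obj K a (proc_with K \<phi> \<psi>) = (\<integral>p. stat_S K a \<phi> p * of_bool (\<psi> p) \<partial>cube K)"
  unfolding power_obj_def stat_S_def proc_with_def
  by (rule Bochner_Integration.integral_cong[OF refl]) (simp add: of_bool_conj sum_distrib_right mult_ac)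

lemma power_obj_closed_testing:
  "power_obj K a (closed_testing K \<phi>) = power_obj K a (proc_with K \<phi> (\<phi> {1..K}))"
proof -
  have "closed_testing K \<phi> k p = proc_with K \<phi> (\<phi> {1..K}) k p" if "k \<in> {1..K}" for k p
    using that unfolding closed_testing_def proc_with_def proper_sets_containing_def by blast
  then show ?thesis
    unfolding power_obj_def by (auto intro!: Bochner_Integration.integral_cong sum.cong)
qed

locale power_objective_setting =
  fixes K :: nat and a :: "nat \<Rightarrow> (nat \<Rightarrow> real) \<Rightarrow> real"
    and \<phi> :: "nat set \<Rightarrow> (nat \<Rightarrow> real) \<Rightarrow> bool" and \<alpha> :: real
  assumes alpha: "0 < \<alpha>" "\<alpha> < 1"
    and a_meas: "\<And>k. k \<in> {1..K} \<Longrightarrow> a k \<in> borel_measurable (cube K)"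
    and a_decr: "\<And>k p j x. k \<in> {1..K} \<Longrightarrow> p \<in> cube_set K \<Longrightarrow> j \<in> {1..K} \<Longrightarrow>
        0 \<le> x \<Longrightarrow> x < p j \<Longrightarrow> a k p < a k (p(j := x))"
    and a_nonneg: "\<And>k p. k \<in> {1..K} \<Longrightarrow> p \<in> cube_set K \<Longrightarrow> 0 \<le> a k p"
    and \<phi>_meas: "\<And>I. I \<noteq> {} \<Longrightarrow> I \<subset> {1..K} \<Longrightarrow> Measurable.pred (cube K) (\<phi> I)"
begin

sublocale cube: prob_space "cube K"
  by (rule prob_space_cube)

lemma
  shows thr_K_nonneg: "0 \<le> thr_K K a \<phi> \<alpha>"
    and measure_phi_tilde_le: "measure (cube K) {p \<in> space (cube K). phi_tilde K a \<phi> \<alpha> p} \<le> \<alpha>"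
    and measure_phi_tilde_eq: "0 < thr_K K a \<phi> \<alpha> \<Longrightarrow>
          measure (cube K) {p \<in> space (cube K). phi_tilde K a \<phi> \<alpha> p} = \<alpha>"
proof -
  let ?S = "stat_S K a \<phi>" and ?t = "thr_K K a \<phi> \<alpha>"
  have S: "?S \<in> borel_measurable (cube K)"
    using a_meas \<phi>_meas by (rule stat_S_measurable)
  have "?t = quantile (distr (cube K) borel ?S) (1 - \<alpha>)"
    unfolding thr_K_def using S by (rule cube.Inf_tail_prob_le_eq_quantile)
  note tail = cube.tail_prob_at_quantile[OF S alpha, folded this]
  show "0 \<le> ?t"
    using a_nonneg by (intro tail(3)) (auto simp: stat_S_def space_cube intro!: sum_nonneg)
  show "measure (cube K) {p \<in> space (cube K). phi_tilde K a \<phi> \<alpha> p} \<le> \<alpha>"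
    using tail(1) by (simp add: phi_tilde_def)
  assume "0 < ?t"
  then have "{p \<in> space (cube K). ?S p = ?t} \<in> null_sets (cube K)"
    unfolding stat_S_def
    using a_meas a_decr measurable_all_proper_tests[where \<phi>=\<phi>, OF \<phi>_meas]
    by (intro null_sets_level_set_weighted_indicator_sum) auto
  then show "measure (cube K) {p \<in> space (cube K). phi_tilde K a \<phi> \<alpha> p} = \<alpha>"
    using tail(2) by (simp add: phi_tilde_def measure_eq_0_null_sets)
qed

lemma antitone_cube_coefficient:
  assumes "k \<in> {1..K}"
  shows "antitone_cube K (a k)"
proof (rule antitone_cubeI_coordinatewise)
  fix p j x assume "p \<in> cube_set K" "j \<in> {1..K}" "0 \<le> x" "x \<le> p j"
  then show "a k p \<le> a k (p(j := x))"
    using a_decr[OF assms] by (cases "x = p j") (auto intro: less_imp_le)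
qed

lemma power_obj_phi_tilde_optimal:
  assumes "Measurable.pred (cube K) \<psi>" and "measure (cube K) {p \<in> space (cube K). \<psi> p} \<le> \<alpha>"
  shows "power_obj K a (proc_with K \<phi> \<psi>) \<le> power_obj K a (proc_with K \<phi> (phi_tilde K a \<phi> \<alpha>))"
  unfolding power_obj_proc_with phi_tilde_def
proof (rule cube.neyman_pearson[OF _ assms(1) thr_K_nonneg])
  show "integrable (cube K) (stat_S K a \<phi>)"
    using a_meas \<phi>_meas a_nonneg antitone_cube_coefficient by (rule integrable_stat_S)
  show "cube.prob {p \<in> space (cube K). \<psi> p} \<le> cube.prob {p \<in> space (cube K). thr_K K a \<phi> \<alpha> < stat_S K a \<phi> p}"
    if "thr_K K a \<phi> \<alpha> \<noteq> 0"
    using that thr_K_nonneg measure_phi_tilde_eq assms(2) by (simp add: phi_tilde_def)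
qed

lemma measurable_phi_tilde: "Measurable.pred (cube K) (phi_tilde K a \<phi> \<alpha>)"
  unfolding phi_tilde_def using stat_S_measurable[OF a_meas \<phi>_meas] by measurable

lemma
  assumes "\<And>I. I \<noteq> {} \<Longrightarrow> I \<subset> {1..K} \<Longrightarrow> mono_test K (\<phi> I)"
  shows mono_test_phi_tilde_if_mono: "mono_test K (phi_tilde K a \<phi> \<alpha>)"
    and mono_proc_phi_tilde_if_mono: "mono_proc K (proc_with K \<phi> (phi_tilde K a \<phi> \<alpha>))"
proof -
  have "antitone_cube K (stat_S K a \<phi>)"
    using a_nonneg antitone_cube_coefficient assms by (rule antitone_cube_stat_S)
  then show mono: "mono_test K (phi_tilde K a \<phi> \<alpha>)"
    by (rule mono_test_phi_tilde)
  from mono assms show "mono_proc K (proc_with K \<phi> (phi_tilde K a \<phi> \<alpha>))"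
    by (rule mono_proc_proc_with)
qed

end

theorem theorem3p1:
  fixes K :: nat and \<alpha> :: real
    and \<Theta> :: "'t set" and P :: "'t \<Rightarrow> (nat \<Rightarrow> real) measure" and null :: "nat \<Rightarrow> 't \<Rightarrow> bool"
    and a :: "nat \<Rightarrow> (nat \<Rightarrow> real) \<Rightarrow> real"
    and \<phi> :: "nat set \<Rightarrow> (nat \<Rightarrow> real) \<Rightarrow> bool"
  assumes K: "K \<ge> 1"
    and alpha: "0 < \<alpha>" "\<alpha> < 1"
    and model_prob: "\<And>\<theta>. \<theta> \<in> \<Theta> \<Longrightarrow> prob_space (P \<theta>) \<and> sets (P \<theta>) = sets (cube K)"
    and model_unif: "\<And>\<theta> k. \<theta> \<in> \<Theta> \<Longrightarrow> k \<in> {1..K} \<Longrightarrow> null k \<theta> \<Longrightarrow>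
        distr (P \<theta>) borel (\<lambda>p. p k) = uniform_measure lborel {0..1::real}"
    and model_indep: "\<And>\<theta>. \<theta> \<in> \<Theta> \<Longrightarrow>
        prob_space.indep_vars (P \<theta>) (\<lambda>_. borel) (\<lambda>k p. p k) {1..K}"
    and model_alt: "\<And>k. k \<in> {1..K} \<Longrightarrow> \<exists>\<theta>s :: nat \<Rightarrow> 't.
        (\<forall>n. \<theta>s n \<in> \<Theta> \<and> \<not> null k (\<theta>s n)) \<and>
        (\<forall>\<epsilon>>0. (\<lambda>n. measure (P (\<theta>s n)) {p \<in> space (P (\<theta>s n)). p k < \<epsilon>}) \<longlonglongrightarrow> 1)"
    and complete_null: "\<exists>\<theta>\<in>\<Theta>. \<forall>k\<in>{1..K}. null k \<theta>"
    and a_cont: "\<And>k. k \<in> {1..K} \<Longrightarrow> continuous_on (cube_set K) (a k)"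
    and a_decr: "\<And>k p j x. k \<in> {1..K} \<Longrightarrow> p \<in> cube_set K \<Longrightarrow> j \<in> {1..K} \<Longrightarrow>
        0 \<le> x \<Longrightarrow> x < p j \<Longrightarrow> a k (p(j := x)) > a k p"
    and a_nonneg: "\<And>k p. k \<in> {1..K} \<Longrightarrow> p \<in> cube_set K \<Longrightarrow> 0 \<le> a k p"
    and phi_meas: "\<And>I. I \<noteq> {} \<Longrightarrow> I \<subseteq> {1..K} \<Longrightarrow> Measurable.pred (cube K) (\<phi> I)"
    and phi_valid: "\<And>I. I \<noteq> {} \<Longrightarrow> I \<subseteq> {1..K} \<Longrightarrow> valid_test \<Theta> P null \<alpha> I (\<phi> I)"
    and phi_single: "\<And>k p. k \<in> {1..K} \<Longrightarrow> \<phi> {k} p = (p k \<le> \<alpha>)"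
  shows "Measurable.pred (cube K) (phi_tilde K a \<phi> \<alpha>)
       \<and> valid_test \<Theta> P null \<alpha> {1..K} (phi_tilde K a \<phi> \<alpha>)
       \<and> (\<forall>\<psi>. Measurable.pred (cube K) \<psi> \<and> valid_test \<Theta> P null \<alpha> {1..K} \<psi> \<longrightarrow>
             power_obj K a (proc_with K \<phi> (phi_tilde K a \<phi> \<alpha>)) \<ge> power_obj K a (proc_with K \<phi> \<psi>))
       \<and> power_obj K a (proc_with K \<phi> (phi_tilde K a \<phi> \<alpha>)) \<ge> power_obj K a (closed_testing K \<phi>)
       \<and> ((\<forall>I. I \<noteq> {} \<and> I \<subseteq> {1..K} \<longrightarrow> mono_test K (\<phi> I)) \<longrightarrow>
            mono_test K (phi_tilde K a \<phi> \<alpha>) \<and> mono_proc K (proc_with K \<phi> (phi_tilde K a \<phi> \<alpha>)))"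
proof -
  have a_meas: "a k \<in> borel_measurable (cube K)" if "k \<in> {1..K}" for k
    using a_cont[OF that] by (rule borel_measurable_continuous_on_cube)
  have proper_meas: "Measurable.pred (cube K) (\<phi> I)" if "I \<noteq> {}" "I \<subset> {1..K}" for I
    using that phi_meas by blast
  interpret power_objective_setting K a \<phi> \<alpha>
    using alpha a_meas a_decr a_nonneg proper_meas by unfold_locales
  have valid_iff: "valid_test \<Theta> P null \<alpha> {1..K} \<psi> \<longleftrightarrow> measure (cube K) {p \<in> space (cube K). \<psi> p} \<le> \<alpha>"
    for \<psi>
    using K model_prob model_unif model_indep complete_null by (rule valid_test_complete_null_iff_cube)
  have optimal: "power_obj K a (proc_with K \<phi> \<psi>) \<le> power_obj K a (proc_with K \<phi> (phi_tilde K a \<phi> \<alpha>))"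
    if "Measurable.pred (cube K) \<psi>" "valid_test \<Theta> P null \<alpha> {1..K} \<psi>" for \<psi>
    using that(1) that(2)[unfolded valid_iff] by (rule power_obj_phi_tilde_optimal)
  have "valid_test \<Theta> P null \<alpha> {1..K} (phi_tilde K a \<phi> \<alpha>)"
    unfolding valid_iff by (rule measure_phi_tilde_le)
  moreover have "power_obj K a (closed_testing K \<phi>) \<le> power_obj K a (proc_with K \<phi> (phi_tilde K a \<phi> \<alpha>))"
    unfolding power_obj_closed_testing using K phi_meas phi_valid by (intro optimal) auto
  moreover have "mono_test K (phi_tilde K a \<phi> \<alpha>) \<and> mono_proc K (proc_with K \<phi> (phi_tilde K a \<phi> \<alpha>))"
    if "\<forall>I. I \<noteq> {} \<and> I \<subseteq> {1..K} \<longrightarrow> mono_test K (\<phi> I)"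
  proof -
    have proper_mono: "mono_test K (\<phi> I)" if "I \<noteq> {}" "I \<subset> {1..K}" for I
      using that \<open>\<forall>I. I \<noteq> {} \<and> I \<subseteq> {1..K} \<longrightarrow> mono_test K (\<phi> I)\<close> by blast
    show ?thesis
      using mono_test_phi_tilde_if_mono[OF proper_mono] mono_proc_phi_tilde_if_mono[OF proper_mono] ..
  qed
  ultimately show ?thesis
    using measurable_phi_tilde optimal by auto
qed

end
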